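(* Let $n\ge 1$ and $m\ge 2$ be integers with $m\nmid n$, let $\ell=\lfloor n/m\rfloor$, let $k$ be an integer with $1\le k\le \ell$, let $s=\lfloor \ell/k\rfloor$, and let $f=\theta_{m,0}+\theta_{m,k}$. Then the order of $f$ under composition is $2^{\lceil\log_2\frac{\ell+1}{k}\rceil}$, and the compositional inverse of $f$ is $$f^{-1}=\theta_{m,0}+\theta_{m,k}+\theta_{m,2k}+\cdots+\theta_{m,sk}.$$ Moreover, the algebraic degree of $f$ is $(m-1)k+1$ and the algebraic degree of $f^{-1}$ is $(m-1)sk+1$.
   Context: For $x=(x_0,\dots,x_{n-1})\in\mathbb{F}_2^n$, indices of coordinates are taken modulo $n$. For a nonnegative integer $k$, the map $\theta_{m,k}\colon\mathbb{F}_2^n\to\mathbb{F}_2^n$ is defined by $\theta_{m,k}(x)=y$ with $y_i=x_{i+mk}\prod_{1\le j\le mk-1,\ m\nmid j}(x_{i+j}+1)$ for $i\in\{0,\dots,n-1\}$; $\theta_{m,0}$ is the identity map. Sums of maps are pointwise sums. The order of $f$ is the least $r\ge1$ with $f^{r}$ (the $r$-fold composition) equal to the identity. The algebraic degree of a map $\mathbb{F}_2^n\to\mathbb{F}_2^n$ is the maximum degree of the algebraic normal forms of its coordinate functions. *)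

theory Defs
  imports Complex_Main
begin

text \<open>Vectors of F_2^n are modelled as functions nat => bool (True = 1) that vanish
  outside the index range {0..<n}.  Addition in F_2 is exclusive or, x + 1 is negation,
  products are conjunctions.\<close>

definition vecs :: "nat \<Rightarrow> (nat \<Rightarrow> bool) set" where
  "vecs n = {x. \<forall>i. n \<le> i \<longrightarrow> \<not> x i}"

definition theta :: "nat \<Rightarrow> nat \<Rightarrow> nat \<Rightarrow> (nat \<Rightarrow> bool) \<Rightarrow> (nat \<Rightarrow> bool)" where
  "theta n m k x = (\<lambda>i. i < n \<and> x ((i + m * k) mod n) \<and>
      (\<forall>j. 1 \<le> j \<and> j < m * k \<and> \<not> m dvd j \<longrightarrow> \<not> x ((i + j) mod n)))"

definition map_sum :: "'j set \<Rightarrow> ('j \<Rightarrow> (nat \<Rightarrow> bool) \<Rightarrow> (nat \<Rightarrow> bool)) \<Rightarrow>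
    (nat \<Rightarrow> bool) \<Rightarrow> (nat \<Rightarrow> bool)" where
  "map_sum J F = (\<lambda>x i. odd (card {j \<in> J. F j x i}))"

definition map_add :: "((nat \<Rightarrow> bool) \<Rightarrow> (nat \<Rightarrow> bool)) \<Rightarrow> ((nat \<Rightarrow> bool) \<Rightarrow> (nat \<Rightarrow> bool)) \<Rightarrow>
    (nat \<Rightarrow> bool) \<Rightarrow> (nat \<Rightarrow> bool)" where
  "map_add F G = (\<lambda>x i. F x i \<noteq> G x i)"

definition is_identity_power :: "nat \<Rightarrow> ((nat \<Rightarrow> bool) \<Rightarrow> (nat \<Rightarrow> bool)) \<Rightarrow> nat \<Rightarrow> bool" where
  "is_identity_power n f r \<longleftrightarrow> (\<forall>x \<in> vecs n. (f ^^ r) x = x)"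

definition map_order :: "nat \<Rightarrow> ((nat \<Rightarrow> bool) \<Rightarrow> (nat \<Rightarrow> bool)) \<Rightarrow> nat" where
  "map_order n f = (LEAST r. 1 \<le> r \<and> is_identity_power n f r)"

definition is_inverse_map :: "nat \<Rightarrow> ((nat \<Rightarrow> bool) \<Rightarrow> (nat \<Rightarrow> bool)) \<Rightarrow>
    ((nat \<Rightarrow> bool) \<Rightarrow> (nat \<Rightarrow> bool)) \<Rightarrow> bool" where
  "is_inverse_map n f g \<longleftrightarrow> (\<forall>x \<in> vecs n. f x \<in> vecs n \<and> g x \<in> vecs n \<and>
      g (f x) = x \<and> f (g x) = x)"

definition anf :: "nat \<Rightarrow> ((nat \<Rightarrow> bool) \<Rightarrow> bool) \<Rightarrow> nat set set" where
  "anf n g = (THE A. A \<subseteq> Pow {..<n} \<and>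
      (\<forall>x \<in> vecs n. g x = odd (card {S \<in> A. \<forall>i \<in> S. x i})))"

definition bool_fun_degree :: "nat \<Rightarrow> ((nat \<Rightarrow> bool) \<Rightarrow> bool) \<Rightarrow> nat" where
  "bool_fun_degree n g = Max (insert 0 (card ` anf n g))"

definition alg_degree :: "nat \<Rightarrow> ((nat \<Rightarrow> bool) \<Rightarrow> (nat \<Rightarrow> bool)) \<Rightarrow> nat" where
  "alg_degree n F = Max (insert 0 ((\<lambda>i. bool_fun_degree n (\<lambda>x. F x i)) ` {..<n}))"

end

(* theta_{m,c} makes sense on one-sided infinite 0/1 sequences, and on F_2^n it is the
   restriction to n-periodic sequences.  A 1 of theta_{m,c}(X) at p certifies a run: X has a 1
   at p + mc and vanishes on the positions of (p, p + mc) off the grid p + mN.  Two runs cannot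
   overlap when one starts off the grid of the other, and this yields the composition law
   theta_a o (theta_0 + sum_j theta_{e_j}) = theta_a + sum_j theta_{a + e_j}  (all e_j > 0).
   For f_a = theta_0 + theta_a it telescopes to f_a o f_a = f_{2a} and
   f_a o (theta_0 + theta_a + ... + theta_{ra}) = f_{(r+1)a}, in both orders.  As m does not
   divide n, theta_c vanishes on F_2^n once mc > n, so f_c is the identity there, whereas f_c
   moves the unit vector e_0 when 0 < mc < n.  Hence f = f_k has order 2^T for the least T with
   2^T k > l, and the series up to theta_{sk} inverts it.
   Coordinate i of theta_c is x_{i+mc} prod_j (x_{i+j} + 1), whose monomials are x_{i+mc} times
   the products over the subsets of the window.  These families are disjoint for distinct c, so
   nothing cancels in a sum of theta's and the largest monomial of the last summand gives the
   degree. *)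

theory Submission
  imports Defs "HOL-Computational_Algebra.Primes"
begin

section \<open>Runs in infinite sequences\<close>

definition cyclic :: "nat \<Rightarrow> (nat \<Rightarrow> bool) \<Rightarrow> nat \<Rightarrow> bool" where
  "cyclic n x p = x (p mod n)"

definition clear_window :: "nat \<Rightarrow> nat \<Rightarrow> (nat \<Rightarrow> bool) \<Rightarrow> nat \<Rightarrow> bool" where
  "clear_window m c X p \<longleftrightarrow> (\<forall>j < m * c. \<not> m dvd j \<longrightarrow> \<not> X (p + j))"

definition theta_seq :: "nat \<Rightarrow> nat \<Rightarrow> (nat \<Rightarrow> bool) \<Rightarrow> nat \<Rightarrow> bool" where
  "theta_seq m c X p \<longleftrightarrow> X (p + m * c) \<and> clear_window m c X p"

lemma theta_eq_theta_seq: "theta n m c x i \<longleftrightarrow> i < n \<and> theta_seq m c (cyclic n x) i"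
  unfolding theta_def theta_seq_def clear_window_def cyclic_def
  by (metis dvd_0_right less_one not_le)

lemma theta_seq_cyclic_mod:
  "theta_seq m c (cyclic n x) (p mod n) \<longleftrightarrow> theta_seq m c (cyclic n x) p"
  by (simp add: theta_seq_def clear_window_def cyclic_def mod_add_left_eq)

lemma theta_seq_0 [simp]: "theta_seq m 0 X p \<longleftrightarrow> X p"
  by (simp add: theta_seq_def clear_window_def)

lemma clear_window_add:
  "clear_window m (a + b) X p \<longleftrightarrow> clear_window m a X p \<and> clear_window m b X (p + m * a)"
proof -
  have split: "(\<forall>j < u + v. P j) \<longleftrightarrow> (\<forall>j < u. P j) \<and> (\<forall>j < v. P (u + j))" for u v :: nat and P
    by (metis add_diff_inverse_nat nat_add_left_cancel_less trans_less_add1)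
  show ?thesis
    unfolding clear_window_def distrib_left split by (simp add: add.assoc dvd_add_right_iff)
qed

lemma theta_seq_add:
  "theta_seq m (a + b) X p \<longleftrightarrow> clear_window m a X p \<and> theta_seq m b X (p + m * a)"
  by (auto simp: theta_seq_def clear_window_add distrib_left add.assoc)

text \<open>Two runs certified by \<open>theta_seq\<close> cannot overlap when the second starts off the grid
  of the first: whichever run ends first places its final 1 in the cleared part of the other.\<close>
lemma theta_seq_no_overlap:
  assumes run: "theta_seq m c X p" and run': "theta_seq m b X (p + d)"
    and "d < m * c" and "\<not> m dvd d"
  shows False
proof -
  consider "d + m * b < m * c" | "d + m * b = m * c" | "m * c < d + m * b" by linarith
  then show False
  proof cases
    case 1
    have "\<not> m dvd (d + m * b)" using \<open>\<not> m dvd d\<close> by (simp add: dvd_add_left_iff)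
    then have "\<not> X (p + (d + m * b))" using run 1 by (simp add: theta_seq_def clear_window_def)
    with run' show False by (simp add: theta_seq_def add.assoc)
  next
    case 2
    then have "m dvd d" by (metis dvd_add_left_iff dvd_triv_left)
    with \<open>\<not> m dvd d\<close> show False ..
  next
    case 3
    define j where "j = m * c - d"
    have "j < m * b" "p + d + j = p + m * c" using 3 \<open>d < m * c\<close> by (auto simp: j_def)
    moreover have "\<not> m dvd j" using \<open>\<not> m dvd d\<close> \<open>d < m * c\<close> unfolding j_def
      by (metis dvd_diff_nat dvd_triv_left diff_diff_cancel less_imp_le)
    ultimately have "\<not> X (p + m * c)"
      using run' unfolding theta_seq_def clear_window_def by metis
    with run show False by (simp add: theta_seq_def)
  qed
qed

lemma clear_window_transfer:
  assumes Y_run: "\<And>p. Y p \<Longrightarrow> \<exists>b. theta_seq m b X p"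
    and clear: "clear_window m a X i" and end_one: "Y (i + m * a)"
  shows "clear_window m a Y i"
  unfolding clear_window_def
proof (intro allI impI notI)
  fix d assume "d < m * a" "\<not> m dvd d" "Y (i + d)"
  obtain b' where "theta_seq m b' X (i + m * a)" using Y_run end_one by blast
  with clear have "theta_seq m (a + b') X i" by (simp add: theta_seq_add)
  moreover obtain b where "theta_seq m b X (i + d)" using Y_run \<open>Y (i + d)\<close> by blast
  moreover have "d < m * (a + b')" using \<open>d < m * a\<close> by (simp add: distrib_left)
  ultimately show False using theta_seq_no_overlap \<open>\<not> m dvd d\<close> by blast
qed

text \<open>The converse direction looks at the last 1 of \<open>X\<close> in the window: no run of positive
  length starts there, so it is also a 1 of \<open>Y\<close>.\<close>
lemma clear_window_transfer_back:
  assumes Y_run: "\<And>p. Y p \<Longrightarrow> \<exists>b. theta_seq m b X p"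
    and X_Y: "\<And>p. X p \<Longrightarrow> (\<And>b. 0 < b \<Longrightarrow> \<not> theta_seq m b X p) \<Longrightarrow> Y p"
    and clear: "clear_window m a Y i" and end_one: "Y (i + m * a)"
  shows "clear_window m a X i"
proof (rule ccontr)
  define D where "D = {d. d < m * a \<and> \<not> m dvd d \<and> X (i + d)}"
  assume "\<not> clear_window m a X i"
  then have "D \<noteq> {}" by (auto simp: D_def clear_window_def)
  moreover have "finite D" by (simp add: D_def)
  ultimately have "Max D \<in> D" and D_le: "\<And>d. d \<in> D \<Longrightarrow> d \<le> Max D" by auto
  then obtain dm where dm: "dm = Max D" "dm < m * a" "\<not> m dvd dm" "X (i + dm)"
    by (auto simp: D_def)
  obtain b' where run': "theta_seq m b' X (i + dm + (m * a - dm))"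
    using Y_run end_one \<open>dm < m * a\<close> by fastforce
  have "\<not> theta_seq m b X (i + dm)" if "0 < b" for b
  proof
    assume run: "theta_seq m b X (i + dm)"
    consider "dm + m * b < m * a" | "dm + m * b = m * a" | "m * a < dm + m * b" by linarith
    then show False
    proof cases
      case 1
      with dm run have "dm + m * b \<in> D" by (simp add: D_def theta_seq_def add.assoc dvd_add_left_iff)
      with D_le dm(1) \<open>0 < b\<close> 1 show False by fastforce
    next
      case 2
      then show False using dm(3) by (metis dvd_add_left_iff dvd_triv_left)
    next
      case 3
      have "\<not> m dvd (m * a - dm)" using dm(2,3)
        by (metis dvd_diff_nat dvd_triv_left diff_diff_cancel less_imp_le)
      moreover have "m * a - dm < m * b" using 3 dm(2) by linarith
      ultimately show False using theta_seq_no_overlap[OF run run'] by blast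
    qed
  qed
  then have "Y (i + dm)" using X_Y dm(4) by blast
  with clear dm show False by (simp add: clear_window_def)
qed

text \<open>With \<open>Y = \<Sum>\<^bsub>j\<in>J\<^esub> \<theta>\<^bsub>e j\<^esub> X\<close> this is
  \<open>\<theta>\<^sub>a \<circ> \<Sum>\<^bsub>j\<in>J\<^esub> \<theta>\<^bsub>e j\<^esub> = \<Sum>\<^bsub>j\<in>J\<^esub> \<theta>\<^bsub>a + e j\<^esub>\<close>,
  valid when exactly one \<open>e j\<close> vanishes.\<close>
lemma theta_seq_comp:
  assumes "finite J" "z \<in> J" and e_zero: "\<And>j. j \<in> J \<Longrightarrow> e j = 0 \<longleftrightarrow> j = z"
    and Y: "\<And>p. Y p \<longleftrightarrow> odd (card {j \<in> J. theta_seq m (e j) X p})"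
  shows "theta_seq m a Y i \<longleftrightarrow> odd (card {j \<in> J. theta_seq m (a + e j) X i})"
proof -
  have Y_run: "\<exists>b. theta_seq m b X p" if "Y p" for p
  proof (rule ccontr)
    assume "\<nexists>b. theta_seq m b X p"
    then have "{j \<in> J. theta_seq m (e j) X p} = {}" by blast
    with that show False by (simp add: Y)
  qed
  have X_Y: "Y p" if "X p" "\<And>b. 0 < b \<Longrightarrow> \<not> theta_seq m b X p" for p
  proof -
    have "e z = 0" using assms(2) e_zero by blast
    with \<open>X p\<close> have "theta_seq m (e z) X p" by simp
    moreover have "\<not> theta_seq m (e j) X p" if "j \<in> J" "j \<noteq> z" for j
    proof -
      have "0 < e j" using that e_zero by auto
      then show ?thesis using \<open>\<And>b. 0 < b \<Longrightarrow> \<not> theta_seq m b X p\<close> by blast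
    qed
    ultimately have "{j \<in> J. theta_seq m (e j) X p} = {z}"
      using assms(2) by blast
    then show ?thesis by (simp add: Y)
  qed
  have "{j \<in> J. theta_seq m (a + e j) X i} =
      (if clear_window m a X i then {j \<in> J. theta_seq m (e j) X (i + m * a)} else {})"
    by (auto simp: theta_seq_add)
  then have "odd (card {j \<in> J. theta_seq m (a + e j) X i}) \<longleftrightarrow>
      clear_window m a X i \<and> Y (i + m * a)"
    by (simp add: Y)
  moreover have "clear_window m a Y i \<longleftrightarrow> clear_window m a X i" if "Y (i + m * a)"
    using clear_window_transfer[of Y m X a i] clear_window_transfer_back[of Y m X a i]
      Y_run X_Y that by blast
  ultimately show ?thesis by (auto simp only: theta_seq_def)
qed

text \<open>The simplifier rewrites \<open>j \<in> {0..r}\<close> to \<open>j \<le> r\<close> and \<open>1::nat\<close> to \<open>Suc 0\<close>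
  before these lemmas can match, so below they are applied with \<open>simp only\<close>.\<close>

lemma odd_card_insert:
  assumes "finite F" "a \<notin> F"
  shows "odd (card {j \<in> insert a F. P j}) \<longleftrightarrow> P a \<noteq> odd (card {j \<in> F. P j})"
proof (cases "P a")
  case True
  then have "{j \<in> insert a F. P j} = insert a {j \<in> F. P j}" by auto
  with assms True show ?thesis by simp
next
  case False
  then have "{j \<in> insert a F. P j} = {j \<in> F. P j}" by auto
  with False show ?thesis by simp
qed

lemma odd_card_atLeastAtMost_0: "odd (card {j \<in> {0..0::nat}. P j}) \<longleftrightarrow> P 0"
  by (cases "P 0") (simp_all add: Collect_conj_eq)

lemma odd_card_atLeastAtMost_Suc:
  "odd (card {j \<in> {0..Suc r}. P j}) \<longleftrightarrow> odd (card {j \<in> {0..r}. P j}) \<noteq> P (Suc r)"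
  using odd_card_insert[of "{0..r}" "Suc r" P] by (auto simp: atLeastAtMostSuc_conv)

lemma odd_card_0_1: "odd (card {j \<in> {0..1::nat}. P j}) \<longleftrightarrow> P 0 \<noteq> P 1"
  by (simp only: One_nat_def odd_card_atLeastAtMost_Suc odd_card_atLeastAtMost_0)

lemma odd_card_telescope:
  fixes P :: "nat \<Rightarrow> bool"
  shows "odd (card {j \<in> {0..r}. P j \<noteq> P (Suc j)}) \<longleftrightarrow> P 0 \<noteq> P (Suc r)"
proof (induction r)
  case 0
  show ?case by (simp only: odd_card_atLeastAtMost_0)
next
  case (Suc r)
  show ?case by (simp only: odd_card_atLeastAtMost_Suc Suc.IH) auto
qed

lemma odd_card_shift:
  "odd (card {j \<in> {0..r}. P j}) \<noteq> odd (card {j \<in> {0..r}. P (Suc j)}) \<longleftrightarrow> P 0 \<noteq> P (Suc r)"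
proof (induction r)
  case 0
  show ?case by (simp only: odd_card_atLeastAtMost_0)
next
  case (Suc r)
  then show ?case by (simp only: odd_card_atLeastAtMost_Suc) auto
qed

section \<open>Composing theta-series\<close>

definition theta_series :: "nat \<Rightarrow> nat \<Rightarrow> nat \<Rightarrow> nat \<Rightarrow> (nat \<Rightarrow> bool) \<Rightarrow> nat \<Rightarrow> bool" where
  "theta_series n m a r = map_sum {0..r} (\<lambda>j. theta n m (j * a))"

lemma theta_series_apply:
  "theta_series n m a r x i \<longleftrightarrow>
    i < n \<and> odd (card {j \<in> {0..r}. theta_seq m (j * a) (cyclic n x) i})"
  by (cases "i < n") (simp_all add: theta_series_def map_sum_def theta_eq_theta_seq)

lemma theta_series_apply_theta:
  "theta_series n m a r y i \<longleftrightarrow> odd (card {j \<in> {0..r}. theta n m (j * a) y i})"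
  by (simp add: theta_series_def map_sum_def)

definition theta_pair :: "nat \<Rightarrow> nat \<Rightarrow> nat \<Rightarrow> (nat \<Rightarrow> bool) \<Rightarrow> nat \<Rightarrow> bool" where
  "theta_pair n m a = map_add (theta n m 0) (theta n m a)"

lemma theta_pair_apply:
  "theta_pair n m a x i \<longleftrightarrow> i < n \<and> x i \<noteq> theta_seq m a (cyclic n x) i"
  by (auto simp: theta_pair_def map_add_def theta_eq_theta_seq cyclic_def)

lemma theta_pair_eq_theta_series: "theta_pair n m a = theta_series n m a 1"
  by (intro ext) (simp only: theta_pair_def map_add_def theta_series_apply_theta odd_card_0_1, simp)

lemma theta_comp_theta_series:
  assumes "0 < a" "0 < n"
  shows "theta n m c (theta_series n m a r x) i \<longleftrightarrow>
    i < n \<and> odd (card {j \<in> {0..r}. theta_seq m (c + j * a) (cyclic n x) i})"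
proof -
  have "cyclic n (theta_series n m a r x) p \<longleftrightarrow>
      odd (card {j \<in> {0..r}. theta_seq m (j * a) (cyclic n x) p})" for p
    using \<open>0 < n\<close> by (simp add: cyclic_def[of n "theta_series n m a r x"] theta_series_apply
        theta_seq_cyclic_mod)
  then have "theta_seq m c (cyclic n (theta_series n m a r x)) i \<longleftrightarrow>
      odd (card {j \<in> {0..r}. theta_seq m (c + j * a) (cyclic n x) i})"
    by (intro theta_seq_comp[where z = 0]) (use \<open>0 < a\<close> in auto)
  then show ?thesis by (simp add: theta_eq_theta_seq)
qed

lemma theta_series_comp_theta_pair:
  assumes "0 < a" "0 < n"
  shows "theta_series n m a r \<circ> theta_pair n m a = theta_pair n m (Suc r * a)"
proof (intro ext, unfold comp_apply)
  fix x i
  define P where "P j = theta_seq m (j * a) (cyclic n x) i" for j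
  have step: "theta n m (j * a) (theta_pair n m a x) i \<longleftrightarrow> i < n \<and> P j \<noteq> P (Suc j)" for j
    by (simp only: theta_pair_eq_theta_series theta_comp_theta_series[OF assms] odd_card_0_1)
      (simp add: P_def add.commute)
  have "theta_series n m a r (theta_pair n m a x) i \<longleftrightarrow>
      i < n \<and> odd (card {j \<in> {0..r}. P j \<noteq> P (Suc j)})"
    by (simp only: theta_series_apply_theta step) (cases "i < n"; simp)
  also have "\<dots> \<longleftrightarrow> i < n \<and> P 0 \<noteq> P (Suc r)"
    using odd_card_telescope[where P = P and r = r] by simp
  also have "\<dots> \<longleftrightarrow> theta_pair n m (Suc r * a) x i"
    by (auto simp: theta_pair_apply P_def cyclic_def)
  finally show "theta_series n m a r (theta_pair n m a x) i = theta_pair n m (Suc r * a) x i" .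
qed

lemma theta_pair_comp_theta_series:
  assumes "0 < a" "0 < n"
  shows "theta_pair n m a \<circ> theta_series n m a r = theta_pair n m (Suc r * a)"
proof (intro ext, unfold comp_apply)
  fix x i
  define P where "P j = theta_seq m (j * a) (cyclic n x) i" for j
  have "theta_pair n m a (theta_series n m a r x) i \<longleftrightarrow>
      i < n \<and> odd (card {j \<in> {0..r}. P j}) \<noteq> odd (card {j \<in> {0..r}. P (Suc j)})"
    by (simp only: theta_pair_eq_theta_series theta_series_apply_theta odd_card_0_1
        theta_comp_theta_series[OF assms])
      (cases "i < n"; simp add: P_def add.commute)
  also have "\<dots> \<longleftrightarrow> i < n \<and> P 0 \<noteq> P (Suc r)"
    using odd_card_shift[where P = P and r = r] by simp
  also have "\<dots> \<longleftrightarrow> theta_pair n m (Suc r * a) x i"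
    by (auto simp: theta_pair_apply P_def cyclic_def)
  finally show "theta_pair n m a (theta_series n m a r x) i = theta_pair n m (Suc r * a) x i" .
qed

text \<open>When \<open>m\<close> does not divide \<open>n\<close>, the window of a run longer than \<open>n\<close> contains the
  position \<open>p + m * c - n\<close>, which is off the grid and carries the same value as the final 1.\<close>
lemma theta_seq_cyclic_vanish:
  assumes "\<not> m dvd n" "n < m * c"
  shows "\<not> theta_seq m c (cyclic n x) p"
proof
  assume run: "theta_seq m c (cyclic n x) p"
  define d where "d = m * c - n"
  have "0 < n" using assms(1) by (metis dvd_0_right gr0I)
  then have "d < m * c" using assms(2) by (simp add: d_def)
  moreover have "\<not> m dvd d"
    using assms unfolding d_def by (metis dvd_diff_nat dvd_triv_left diff_diff_cancel less_imp_le)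
  moreover have "p + m * c = p + d + n" using assms(2) by (simp add: d_def)
  then have "cyclic n x (p + d) = cyclic n x (p + m * c)" by (metis cyclic_def mod_add_self2)
  ultimately show False using run by (auto simp: theta_seq_def clear_window_def)
qed

lemma theta_pair_eq_self:
  assumes "\<not> m dvd n" "n < m * c" "x \<in> vecs n"
  shows "theta_pair n m c x = x"
proof
  fix i
  show "theta_pair n m c x i = x i"
    using assms theta_seq_cyclic_vanish by (cases "i < n") (auto simp: theta_pair_apply vecs_def)
qed

lemma theta_pair_moves_unit_vector:
  assumes "0 < m * c" "m * c < n"
  shows "theta_pair n m c (\<lambda>p. p = 0) \<noteq> (\<lambda>p. p = 0)"
proof
  define i where "i = n - m * c"
  have i: "0 < i" "i < n" "i + m * c = n" using assms by (auto simp: i_def)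
  have "theta_seq m c (cyclic n (\<lambda>p. p = 0)) i"
    using i by (auto simp: theta_seq_def clear_window_def cyclic_def)
  moreover assume "theta_pair n m c (\<lambda>p. p = 0) = (\<lambda>p. p = 0)"
  then have "theta_pair n m c (\<lambda>p. p = 0) i = (i = 0)" by simp
  ultimately show False using i by (simp add: theta_pair_apply)
qed

lemma funpow_theta_pair:
  assumes "0 < a" "0 < n"
  shows "theta_pair n m a ^^ 2 ^ t = theta_pair n m (2 ^ t * a)"
proof (induction t)
  case 0
  show ?case by simp
next
  case (Suc t)
  have "theta_pair n m a ^^ 2 ^ Suc t = theta_pair n m a ^^ 2 ^ t \<circ> theta_pair n m a ^^ 2 ^ t"
    by (simp add: funpow_add mult_2)
  also have "\<dots> = theta_series n m (2 ^ t * a) 1 \<circ> theta_pair n m (2 ^ t * a)"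
    unfolding Suc.IH theta_pair_eq_theta_series[of n m "2 ^ t * a", symmetric] ..
  also have "\<dots> = theta_pair n m (Suc 1 * (2 ^ t * a))"
    using assms by (intro theta_series_comp_theta_pair) auto
  finally show ?case by (simp only: Suc_1 power_Suc mult.assoc)
qed

lemma is_identity_power_mult:
  assumes "is_identity_power n f r"
  shows "is_identity_power n f (q * r)"
  unfolding is_identity_power_def
proof
  fix x assume "x \<in> vecs n"
  then have "((f ^^ r) ^^ q) x = x"
    using assms by (induction q) (auto simp: is_identity_power_def)
  then show "(f ^^ (q * r)) x = x" by (simp add: funpow_mult mult.commute)
qed

lemma is_identity_power_mod:
  assumes "is_identity_power n f a" "is_identity_power n f b"
  shows "is_identity_power n f (a mod b)"
  unfolding is_identity_power_def
proof
  fix x assume "x \<in> vecs n"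
  have "(f ^^ (a mod b)) x = (f ^^ (a mod b)) ((f ^^ (a div b * b)) x)"
    using is_identity_power_mult[OF assms(2)] \<open>x \<in> vecs n\<close> by (simp add: is_identity_power_def)
  also have "\<dots> = (f ^^ (a mod b + a div b * b)) x" by (simp only: funpow_add comp_apply)
  also have "\<dots> = (f ^^ a) x" by simp
  finally show "(f ^^ (a mod b)) x = x" using assms(1) \<open>x \<in> vecs n\<close> by (simp add: is_identity_power_def)
qed

lemma map_order_is_identity_power:
  assumes "is_identity_power n f r" "0 < r"
  shows "0 < map_order n f \<and> is_identity_power n f (map_order n f)"
  using LeastI[of "\<lambda>r. 1 \<le> r \<and> is_identity_power n f r" r] assms by (simp add: map_order_def)

lemma map_order_dvd:
  assumes "is_identity_power n f r"
  shows "map_order n f dvd r"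
proof (cases "r = 0")
  case False
  then have ord: "0 < map_order n f" "is_identity_power n f (map_order n f)"
    using map_order_is_identity_power assms by auto
  then have "is_identity_power n f (r mod map_order n f)"
    using is_identity_power_mod assms by blast
  moreover have "r mod map_order n f < map_order n f" using ord(1) by simp
  ultimately have "r mod map_order n f = 0"
    using not_less_Least[of "r mod map_order n f" "\<lambda>r. 1 \<le> r \<and> is_identity_power n f r"]
    by (auto simp: map_order_def)
  then show ?thesis by (simp add: mod_eq_0_iff_dvd)
qed simp

lemma map_order_eq_prime_power:
  assumes "prime p" "is_identity_power n f (p ^ Suc t)" "\<not> is_identity_power n f (p ^ t)"
  shows "map_order n f = p ^ Suc t"
proof -
  obtain v where v: "v \<le> Suc t" "map_order n f = p ^ v"
    using map_order_dvd[OF assms(2)] divides_primepow_nat[OF assms(1)] by blast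
  have "0 < p ^ Suc t" using prime_gt_0_nat[OF assms(1)] by (rule zero_less_power)
  then have ord: "is_identity_power n f (map_order n f)"
    using map_order_is_identity_power[OF assms(2)] by blast
  have "\<not> v \<le> t"
  proof
    assume "v \<le> t"
    then obtain q where "p ^ t = q * map_order n f"
      using v(2) le_imp_power_dvd by (metis dvdE mult.commute)
    then show False using is_identity_power_mult[OF ord, of q] assms(3) by simp
  qed
  with v show ?thesis by (simp add: le_Suc_eq)
qed

lemma mult_div_less_of_not_dvd:
  fixes m n :: nat
  assumes "\<not> m dvd n"
  shows "m * (n div m) < n"
proof -
  have "n mod m \<noteq> 0" using assms by (simp add: dvd_eq_mod_eq_0)
  then show ?thesis using mult_div_mod_eq[of m n] by linarith
qed

lemma map_order_theta_pair:
  assumes "\<not> m dvd n" "0 < k" "2 ^ t * k \<le> n div m" "n div m < 2 ^ Suc t * k"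
  shows "is_identity_power n (theta_pair n m k) (2 ^ Suc t)"
    and "map_order n (theta_pair n m k) = 2 ^ Suc t"
proof -
  have "0 < n" using assms(1) by (metis dvd_0_right gr0I)
  have "0 < m" using assms(2,3) by (cases "m = 0") auto
  have "n < m * (2 ^ Suc t * k)"
    using assms(4) \<open>0 < m\<close> by (simp add: div_less_iff_less_mult mult.commute)
  then show idp: "is_identity_power n (theta_pair n m k) (2 ^ Suc t)"
    using assms(1) \<open>0 < k\<close> \<open>0 < n\<close>
    by (simp add: is_identity_power_def funpow_theta_pair theta_pair_eq_self del: power_Suc)
  have "0 < m * (2 ^ t * k)" using \<open>0 < m\<close> \<open>0 < k\<close> by simp
  moreover have "m * (2 ^ t * k) < n"
    using assms(3) mult_div_less_of_not_dvd[OF assms(1)] by (meson le_less_trans mult_le_mono2)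
  ultimately have "theta_pair n m (2 ^ t * k) (\<lambda>p. p = 0) \<noteq> (\<lambda>p. p = 0)"
    by (rule theta_pair_moves_unit_vector)
  moreover have "(\<lambda>p. p = 0) \<in> vecs n" using \<open>0 < n\<close> by (simp add: vecs_def)
  ultimately have "\<not> is_identity_power n (theta_pair n m k) (2 ^ t)"
    using \<open>0 < k\<close> \<open>0 < n\<close> by (auto simp: is_identity_power_def funpow_theta_pair)
  with idp show "map_order n (theta_pair n m k) = 2 ^ Suc t"
    by (intro map_order_eq_prime_power) auto
qed

lemma nat_ceiling_log2_eq:
  fixes l k t :: nat
  assumes "0 < k" "2 ^ t * k \<le> l" "l < 2 ^ Suc t * k"
  shows "nat \<lceil>log 2 ((real l + 1) / real k)\<rceil> = Suc t"
proof -
  have "real (2 ^ t * k) < real (l + 1)" "real (l + 1) \<le> real (2 ^ Suc t * k)"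
    using assms(2,3) by linarith+
  then have "2 ^ t < (real l + 1) / real k" "(real l + 1) / real k \<le> 2 ^ Suc t"
    using assms(1) by (simp_all add: pos_less_divide_eq pos_divide_le_eq)
  then have "\<lceil>log 2 ((real l + 1) / real k)\<rceil> = int t + 1"
    using ceiling_log_eq_powr_iff[of "(real l + 1) / real k" 2 t] assms(1)
    by (simp add: powr_add powr_realpow)
  then show ?thesis by simp
qed

section \<open>Algebraic normal forms\<close>

definition anf_eval :: "nat set set \<Rightarrow> (nat \<Rightarrow> bool) \<Rightarrow> bool" where
  "anf_eval A x \<longleftrightarrow> odd (card {S \<in> A. \<forall>i \<in> S. x i})"

text \<open>Evaluating at the indicator of a monomial of least size in the symmetric difference
  separates the two sums.\<close>
lemma anf_eval_unique:
  assumes A: "A \<subseteq> Pow {..<n}" and B: "B \<subseteq> Pow {..<n}"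
    and eq: "\<And>x. x \<in> vecs n \<Longrightarrow> anf_eval A x = anf_eval B x"
  shows "A = B"
proof (rule ccontr)
  define D where "D = (A - B) \<union> (B - A)"
  assume "A \<noteq> B"
  then obtain S1 where "S1 \<in> D" by (auto simp: D_def)
  then obtain S0 where "S0 \<in> D" and least: "\<And>S. S \<in> D \<Longrightarrow> card S0 \<le> card S"
    using ex_has_least_nat[of "\<lambda>S. S \<in> D" S1 card] by blast
  have S0: "S0 \<subseteq> {..<n}" using \<open>S0 \<in> D\<close> A B by (auto simp: D_def)
  then have "finite S0" by (rule finite_subset) simp
  define C where "C = {S \<in> A. S \<subset> S0}"
  have C_B: "C = {S \<in> B. S \<subset> S0}"
  proof -
    have "S \<notin> D" if "S \<subset> S0" for S
      using least[of S] psubset_card_mono[OF \<open>finite S0\<close> that] by linarith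
    then show ?thesis by (auto simp: C_def D_def)
  qed
  have "finite C" by (rule finite_subset[of _ "Pow S0"]) (use \<open>finite S0\<close> in \<open>auto simp: C_def\<close>)
  moreover have "S0 \<notin> C" by (simp add: C_def)
  moreover have "{S \<in> A. \<forall>i \<in> S. i \<in> S0} = (if S0 \<in> A then insert S0 C else C)"
    by (auto simp: C_def)
  moreover have "{S \<in> B. \<forall>i \<in> S. i \<in> S0} = (if S0 \<in> B then insert S0 C else C)"
    by (auto simp: C_B)
  moreover have "(\<lambda>i. i \<in> S0) \<in> vecs n" using S0 by (auto simp: vecs_def)
  ultimately show False
    using eq[of "\<lambda>i. i \<in> S0"] \<open>S0 \<in> D\<close> by (auto simp: anf_eval_def D_def split: if_splits)
qed

lemma anf_eqI:
  assumes "A \<subseteq> Pow {..<n}" "\<And>x. x \<in> vecs n \<Longrightarrow> g x = anf_eval A x"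
  shows "anf n g = A"
  unfolding anf_def anf_eval_def[symmetric]
proof (rule the_equality)
  show "A \<subseteq> Pow {..<n} \<and> (\<forall>x \<in> vecs n. g x = anf_eval A x)" using assms by blast
  fix B assume "B \<subseteq> Pow {..<n} \<and> (\<forall>x \<in> vecs n. g x = anf_eval B x)"
  then show "B = A" using assms by (intro anf_eval_unique[of B n A]) auto
qed

lemma anf_eval_insert_Pow:
  assumes "finite J" "v \<notin> J"
  shows "anf_eval (insert v ` Pow J) x \<longleftrightarrow> x v \<and> (\<forall>q \<in> J. \<not> x q)"
proof -
  define K where "K = J \<inter> Collect x"
  have "{S \<in> insert v ` Pow J. \<forall>i \<in> S. x i} = (if x v then insert v ` Pow K else {})"
    by (auto simp: K_def)
  moreover have "inj_on (insert v) (Pow K)"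
    using assms(2) by (auto simp: inj_on_def insert_ident K_def)
  moreover have "finite K" using assms(1) by (simp add: K_def)
  ultimately have "anf_eval (insert v ` Pow J) x \<longleftrightarrow> x v \<and> K = {}"
    by (simp add: anf_eval_def card_image card_Pow)
  then show ?thesis by (auto simp: K_def)
qed

lemma anf_eval_UN:
  assumes "finite I" "\<And>j. j \<in> I \<Longrightarrow> finite (A j)"
    and "\<And>i j. i \<in> I \<Longrightarrow> j \<in> I \<Longrightarrow> i \<noteq> j \<Longrightarrow> A i \<inter> A j = {}"
  shows "anf_eval (\<Union>j \<in> I. A j) x \<longleftrightarrow> odd (card {j \<in> I. anf_eval (A j) x})"
  using assms
proof (induction I rule: finite_induct)
  case (insert a I)
  have "A a \<inter> (\<Union>j \<in> I. A j) = {}"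
    using insert.prems(2) insert.hyps(2) by blast
  then have "card {S \<in> (\<Union>j \<in> insert a I. A j). \<forall>i \<in> S. x i} =
      card {S \<in> A a. \<forall>i \<in> S. x i} + card {S \<in> (\<Union>j \<in> I. A j). \<forall>i \<in> S. x i}"
    using insert.prems(1) insert.hyps(1)
    by (subst card_Un_disjoint[symmetric]) (auto intro: arg_cong[where f = card])
  then have "anf_eval (\<Union>j \<in> insert a I. A j) x \<longleftrightarrow>
      anf_eval (A a) x \<noteq> anf_eval (\<Union>j \<in> I. A j) x"
    by (simp add: anf_eval_def)
  also have "anf_eval (\<Union>j \<in> I. A j) x \<longleftrightarrow> odd (card {j \<in> I. anf_eval (A j) x})"
    by (rule insert.IH) (use insert.prems in auto)
  also have "anf_eval (A a) x \<noteq> odd (card {j \<in> I. anf_eval (A j) x}) \<longleftrightarrow>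
      odd (card {j \<in> insert a I. anf_eval (A j) x})"
    by (rule odd_card_insert[OF insert.hyps, symmetric])
  finally show ?case .
qed (simp add: anf_eval_def)

section \<open>The monomials of theta\<close>

lemma mod_add_left_inj:
  fixes i u v n :: nat
  assumes "(i + u) mod n = (i + v) mod n" "u < n" "v < n"
  shows "u = v"
proof -
  have "u = v" if "u \<le> v" "(i + u) mod n = (i + v) mod n" "v < n" for u v
  proof -
    have "n dvd v - u" using that(1,2) mod_eq_dvd_iff_nat[of "i + u" "i + v" n] by simp
    moreover have "v - u < n" using that(3) by linarith
    ultimately show "u = v" using that(1) by (metis nat_dvd_not_less diff_is_0_eq gr0I le_antisym)
  qed
  from this[of u v] this[of v u] assms show ?thesis by (cases "u \<le> v") auto
qed

lemma card_non_multiples: "card {j. j < m * c \<and> \<not> m dvd j} = (m - 1) * c"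
proof (cases "m = 0")
  case False
  have "{j. j < m * c \<and> m dvd j} = (\<lambda>q. m * q) ` {..<c}"
  proof (intro equalityI subsetI)
    fix j assume "j \<in> {j. j < m * c \<and> m dvd j}"
    then obtain q where "j = m * q" "m * q < m * c" by (auto elim: dvdE)
    then show "j \<in> (\<lambda>q. m * q) ` {..<c}" by simp
  qed (use False in auto)
  moreover have "inj_on (\<lambda>q. m * q) {..<c}" using False by (simp add: inj_on_def)
  ultimately have "card {j. j < m * c \<and> m dvd j} = c" by (simp add: card_image)
  moreover have "card ({..<m * c} - {j. j < m * c \<and> m dvd j}) =
      m * c - card {j. j < m * c \<and> m dvd j}"
    by (subst card_Diff_subset) auto
  moreover have "{j. j < m * c \<and> \<not> m dvd j} = {..<m * c} - {j. j < m * c \<and> m dvd j}" by auto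
  ultimately show ?thesis by (simp add: diff_mult_distrib)
qed simp

definition theta_window :: "nat \<Rightarrow> nat \<Rightarrow> nat \<Rightarrow> nat \<Rightarrow> nat set" where
  "theta_window n m c i = (\<lambda>j. (i + j) mod n) ` {j. j < m * c \<and> \<not> m dvd j}"

text \<open>The algebraic normal form of \<open>x\<^bsub>i+mc\<^esub> \<Prod>\<^sub>j (x\<^bsub>i+j\<^esub> + 1)\<close>: all
  monomials \<open>x\<^bsub>i+mc\<^esub> \<Prod>\<^bsub>q\<in>T\<^esub> x\<^sub>q\<close> with \<open>T\<close> a subset of the window.\<close>
definition theta_monomials :: "nat \<Rightarrow> nat \<Rightarrow> nat \<Rightarrow> nat \<Rightarrow> nat set set" where
  "theta_monomials n m c i = insert ((i + m * c) mod n) ` Pow (theta_window n m c i)"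

lemma finite_theta_window: "finite (theta_window n m c i)"
  by (simp add: theta_window_def)

lemma card_theta_window:
  assumes "m * c < n"
  shows "card (theta_window n m c i) = (m - 1) * c"
proof -
  have "inj_on (\<lambda>j. (i + j) mod n) {j. j < m * c \<and> \<not> m dvd j}"
  proof (rule inj_onI)
    fix u v assume "u \<in> {j. j < m * c \<and> \<not> m dvd j}" "v \<in> {j. j < m * c \<and> \<not> m dvd j}"
      and eq: "(i + u) mod n = (i + v) mod n"
    with assms show "u = v" using mod_add_left_inj[OF eq] by simp
  qed
  then show ?thesis unfolding theta_window_def by (simp only: card_image card_non_multiples)
qed

lemma theta_end_notin_window:
  assumes "m * c < n" "c \<le> c'" "m * c' < n"
  shows "(i + m * c') mod n \<notin> theta_window n m c i"
proof
  assume "(i + m * c') mod n \<in> theta_window n m c i"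
  then obtain j where "j < m * c" "\<not> m dvd j" "(i + m * c') mod n = (i + j) mod n"
    by (auto simp: theta_window_def)
  moreover from this have "m * c' = j" using assms mod_add_left_inj by (meson less_trans)
  ultimately show False by auto
qed

lemma theta_eq_anf_eval:
  assumes "m * c < n" "i < n"
  shows "theta n m c x i \<longleftrightarrow> anf_eval (theta_monomials n m c i) x"
proof -
  have "(\<forall>q \<in> theta_window n m c i. \<not> x q) \<longleftrightarrow> clear_window m c (cyclic n x) i"
    by (auto simp: theta_window_def clear_window_def cyclic_def)
  then show ?thesis
    using assms theta_end_notin_window[OF assms(1) order_refl assms(1)]
    by (simp add: theta_monomials_def anf_eval_insert_Pow finite_theta_window theta_eq_theta_seq
        theta_seq_def cyclic_def)
qed

lemma theta_monomials_disjoint: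
  assumes "0 < m" "c < c'" "m * c' < n"
  shows "theta_monomials n m c i \<inter> theta_monomials n m c' i = {}"
proof -
  have "m * c < m * c'" using assms(1,2) by simp
  then have "(i + m * c') mod n \<noteq> (i + m * c) mod n"
    using assms(3) mod_add_left_inj by (metis less_trans less_irrefl)
  moreover have "(i + m * c') mod n \<notin> theta_window n m c i"
    using assms(2,3) \<open>m * c < m * c'\<close> by (intro theta_end_notin_window) linarith+
  ultimately show ?thesis by (auto simp: theta_monomials_def)
qed

lemma card_theta_monomials_le:
  assumes "S \<in> theta_monomials n m c i" "m * c < n"
  shows "card S \<le> (m - 1) * c + 1"
proof -
  obtain T where T: "T \<subseteq> theta_window n m c i" "S = insert ((i + m * c) mod n) T"
    using assms(1) by (auto simp: theta_monomials_def)
  then have "card S \<le> card T + 1" using finite_theta_window finite_subset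
    by (metis Suc_eq_plus1 le_refl card_insert_if le_SucI)
  also have "card T \<le> (m - 1) * c"
    using T(1) card_theta_window[OF assms(2)] finite_theta_window by (metis card_mono)
  finally show ?thesis by simp
qed

lemma card_theta_monomials_top:
  assumes "m * c < n"
  shows "insert ((i + m * c) mod n) (theta_window n m c i) \<in> theta_monomials n m c i"
    and "card (insert ((i + m * c) mod n) (theta_window n m c i)) = (m - 1) * c + 1"
  using assms theta_end_notin_window[OF assms order_refl assms] card_theta_window[OF assms]
  by (auto simp: theta_monomials_def finite_theta_window)

lemma anf_theta_series:
  assumes "0 < m" "0 < a" "m * (r * a) < n" "i < n"
  shows "anf n (\<lambda>x. theta_series n m a r x i) = (\<Union>j \<in> {0..r}. theta_monomials n m (j * a) i)"
proof (rule anf_eqI)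
  have small: "m * (j * a) < n" if "j \<le> r" for j
    using assms(3) that by (meson le_less_trans mult_le_mono1 mult_le_mono2)
  show "(\<Union>j \<in> {0..r}. theta_monomials n m (j * a) i) \<subseteq> Pow {..<n}"
    using assms(4) by (auto simp: theta_monomials_def theta_window_def)
  have disjoint: "theta_monomials n m (j * a) i \<inter> theta_monomials n m (j' * a) i = {}"
    if "j \<le> r" "j' \<le> r" "j \<noteq> j'" for j j'
  proof (cases "j < j'")
    case True
    then have "j * a < j' * a" using assms(2) by simp
    then show ?thesis using theta_monomials_disjoint[OF assms(1)] small that(2) by blast
  next
    case False
    then have "j' * a < j * a" using assms(2) that(3) by simp
    then show ?thesis using theta_monomials_disjoint[OF assms(1)] small that(1) by blast
  qed
  fix x
  have "{j \<in> {0..r}. theta n m (j * a) x i} =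
      {j \<in> {0..r}. anf_eval (theta_monomials n m (j * a) i) x}"
    using theta_eq_anf_eval[OF small assms(4)] by auto
  then have "theta_series n m a r x i \<longleftrightarrow>
      odd (card {j \<in> {0..r}. anf_eval (theta_monomials n m (j * a) i) x})"
    by (simp only: theta_series_apply_theta)
  also have "\<dots> \<longleftrightarrow> anf_eval (\<Union>j \<in> {0..r}. theta_monomials n m (j * a) i) x"
    using disjoint by (intro anf_eval_UN[symmetric]) (auto simp: theta_monomials_def finite_theta_window)
  finally show "theta_series n m a r x i = anf_eval (\<Union>j \<in> {0..r}. theta_monomials n m (j * a) i) x" .
qed

lemma bool_fun_degree_theta_series:
  assumes "0 < m" "0 < a" "m * (r * a) < n" "i < n"
  shows "bool_fun_degree n (\<lambda>x. theta_series n m a r x i) = (m - 1) * r * a + 1"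
  unfolding bool_fun_degree_def anf_theta_series[OF assms]
proof (rule Max_eqI)
  show "finite (insert 0 (card ` (\<Union>j \<in> {0..r}. theta_monomials n m (j * a) i)))"
    by (simp add: theta_monomials_def finite_theta_window)
  show "d \<le> (m - 1) * r * a + 1" if "d \<in> insert 0 (card ` (\<Union>j \<in> {0..r}. theta_monomials n m (j * a) i))" for d
  proof -
    have "card S \<le> (m - 1) * r * a + 1" if "j \<le> r" "S \<in> theta_monomials n m (j * a) i" for j S
    proof -
      have "m * (j * a) < n" using assms(3) \<open>j \<le> r\<close> by (meson le_less_trans mult_le_mono1 mult_le_mono2)
      then have "card S \<le> (m - 1) * (j * a) + 1" using card_theta_monomials_le that(2) by blast
      also have "\<dots> \<le> (m - 1) * r * a + 1" using \<open>j \<le> r\<close> by (simp add: mult.assoc)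
      finally show ?thesis .
    qed
    then show ?thesis using that by auto
  qed
  show "(m - 1) * r * a + 1 \<in> insert 0 (card ` (\<Union>j \<in> {0..r}. theta_monomials n m (j * a) i))"
    using card_theta_monomials_top[OF assms(3), of i] by (force simp: mult.assoc)
qed

lemma alg_degree_eqI:
  assumes "0 < n" "\<And>i. i < n \<Longrightarrow> bool_fun_degree n (\<lambda>x. F x i) = d"
  shows "alg_degree n F = d"
proof -
  have "(\<lambda>i. bool_fun_degree n (\<lambda>x. F x i)) ` {..<n} = {d}" using assms by force
  then show ?thesis by (simp add: alg_degree_def)
qed

lemma alg_degree_theta_series:
  assumes "0 < m" "0 < a" "m * (r * a) < n"
  shows "alg_degree n (theta_series n m a r) = (m - 1) * r * a + 1"
  using assms by (intro alg_degree_eqI bool_fun_degree_theta_series) auto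

theorem theorem3:
  fixes n m k :: nat
  assumes "n \<ge> 1" and "m \<ge> 2" and "\<not> m dvd n"
    and "1 \<le> k" and "k \<le> n div m"
  defines "l \<equiv> n div m"
  defines "s \<equiv> l div k"
  defines "f \<equiv> map_add (theta n m 0) (theta n m k)"
  defines "g \<equiv> map_sum {0..s} (\<lambda>j. theta n m (j * k))"
  shows "(\<exists>r\<ge>1. is_identity_power n f r)
      \<and> map_order n f = 2 ^ nat \<lceil>log 2 ((real l + 1) / real k)\<rceil>
      \<and> is_inverse_map n f g
      \<and> alg_degree n f = (m - 1) * k + 1
      \<and> alg_degree n g = (m - 1) * s * k + 1"
proof -
  have "0 < n" "0 < m" "0 < k" using assms by auto
  have f: "f = theta_pair n m k" by (simp add: f_def theta_pair_def)
  have g: "g = theta_series n m k s" by (simp add: g_def theta_series_def)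
  have "m * l < n" using mult_div_less_of_not_dvd[OF assms(3)] by (simp add: l_def)
  have "0 < s" using assms(4,5) by (simp add: s_def l_def div_greater_zero_iff)
  then obtain t where t: "2 ^ t \<le> s" "s < 2 ^ Suc t" using ex_power_ivl1[of 2 s] by auto
  then have t_bounds: "2 ^ t * k \<le> l" "l < 2 ^ Suc t * k" using \<open>0 < k\<close>
    by (simp_all add: s_def less_eq_div_iff_mult_less_eq div_less_iff_less_mult)
  have order: "is_identity_power n f (2 ^ Suc t)" "map_order n f = 2 ^ Suc t"
    using map_order_theta_pair[OF assms(3) \<open>0 < k\<close>] t_bounds by (simp_all add: f l_def)
  then have "\<exists>r\<ge>1. is_identity_power n f r" by (intro exI[of _ "2 ^ Suc t"]) simp
  have "l < Suc s * k" using div_less_iff_less_mult[OF \<open>0 < k\<close>, of l "Suc s"] by (simp add: s_def)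
  then have "n < m * (Suc s * k)"
    using div_less_iff_less_mult[OF \<open>0 < m\<close>, of n "Suc s * k"] by (simp add: l_def mult.commute)
  then have "g (f x) = x" "f (g x) = x" if "x \<in> vecs n" for x
    using theta_series_comp_theta_pair theta_pair_comp_theta_series theta_pair_eq_self that
      assms(3) \<open>0 < k\<close> \<open>0 < n\<close> unfolding f g by (metis comp_apply)+
  then have "is_inverse_map n f g"
    by (auto simp: is_inverse_map_def vecs_def f g theta_pair_apply theta_series_apply)
  moreover have "k \<le> l" "s * k \<le> l" using assms(5) by (simp_all add: l_def s_def)
  then have "m * (1 * k) < n" "m * (s * k) < n"
    using \<open>m * l < n\<close> by (metis le_less_trans mult_1 mult_le_mono2)+
  ultimately show ?thesis
    using \<open>\<exists>r\<ge>1. is_identity_power n f r\<close> order nat_ceiling_log2_eq[OF \<open>0 < k\<close> t_bounds]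
      alg_degree_theta_series \<open>0 < m\<close> \<open>0 < k\<close>
    by (simp add: f g theta_pair_eq_theta_series)
qed

end
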